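(* Let $\mathcal{C}$ be a category and $\mathcal{W}$ a class of morphisms of $\mathcal{C}$ satisfying (L0) and (L1). Let $\mathcal{W}_L$ be the class of morphisms generated under composition by $\mathcal{W}$ and all split monomorphisms of $\mathcal{C}$. Then the following two conditions are equivalent: (L2): for every $w\in\mathcal{W}$ and parallel morphisms $f_1,f_2$ with $\mathrm{dom}(f_i)=\mathrm{cod}(w)$ and $f_1w=f_2w$, there exists $w'\in\mathcal{W}$ with $\mathrm{dom}(w')=\mathrm{cod}(f_1)$ and $w'f_1=w'f_2$; (L2'): for every $w\in\mathcal{W}$ and parallel morphisms $f_1,f_2$ with $\mathrm{dom}(f_i)=\mathrm{cod}(w)$ and $f_1w=f_2w$, there exists $w'\in\mathcal{W}_L$ with $\mathrm{dom}(w')=\mathrm{cod}(f_1)$ and $w'f_1=w'f_2$. Here (L0): $\mathcal{W}$ contains all identity morphisms and is closed under composition; (L1): for every $w\in\mathcal{W}$ and every morphism $f$ with $\mathrm{dom}(f)=\mathrm{dom}(w)$ there exist $w'\in\mathcal{W}$ with $\mathrm{dom}(w')=\mathrm{cod}(f)$ and a morphism $f'$ with $\mathrm{dom}(f')=\mathrm{cod}(w)$, $\mathrm{cod}(f')=\mathrm{cod}(w')$, such that $w'f=f'w$.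
   Context: A split monomorphism is a morphism $m$ having a left inverse $e$, i.e. $em=\mathrm{id}$. *)

theory Defs
  imports Main
begin

text \<open>A (possibly large) category given by its objects, arrows, domain, codomain,
  identities and composition. comp g f denotes the composite g after f
  (defined when cod f = dom g).\<close>

record ('o, 'm) category =
  Obj  :: "'o set"
  Arr  :: "'m set"
  dom  :: "'m \<Rightarrow> 'o"
  cod  :: "'m \<Rightarrow> 'o"
  idm  :: "'o \<Rightarrow> 'm"
  comp :: "'m \<Rightarrow> 'm \<Rightarrow> 'm"

definition is_category :: "('o, 'm) category \<Rightarrow> bool" where
  "is_category C \<longleftrightarrow>
     (\<forall>f\<in>Arr C. dom C f \<in> Obj C \<and> cod C f \<in> Obj C) \<and>
     (\<forall>a\<in>Obj C. idm C a \<in> Arr C \<and> dom C (idm C a) = a \<and> cod C (idm C a) = a) \<and>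
     (\<forall>f\<in>Arr C. \<forall>g\<in>Arr C. cod C f = dom C g \<longrightarrow>
        comp C g f \<in> Arr C \<and> dom C (comp C g f) = dom C f \<and> cod C (comp C g f) = cod C g) \<and>
     (\<forall>f\<in>Arr C. comp C (idm C (cod C f)) f = f \<and> comp C f (idm C (dom C f)) = f) \<and>
     (\<forall>f\<in>Arr C. \<forall>g\<in>Arr C. \<forall>h\<in>Arr C. cod C f = dom C g \<longrightarrow> cod C g = dom C h \<longrightarrow>
        comp C h (comp C g f) = comp C (comp C h g) f)"

definition split_mono :: "('o, 'm) category \<Rightarrow> 'm \<Rightarrow> bool" where
  "split_mono C m \<longleftrightarrow> m \<in> Arr C \<and>
     (\<exists>e\<in>Arr C. dom C e = cod C m \<and> cod C e = dom C m \<and> comp C e m = idm C (dom C m))"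

inductive_set comp_closure :: "('o, 'm) category \<Rightarrow> 'm set \<Rightarrow> 'm set"
  for C :: "('o, 'm) category" and S :: "'m set" where
  base: "s \<in> S \<Longrightarrow> s \<in> comp_closure C S"
| compose: "f \<in> comp_closure C S \<Longrightarrow> g \<in> comp_closure C S \<Longrightarrow> cod C f = dom C g
            \<Longrightarrow> comp C g f \<in> comp_closure C S"

definition W_L :: "('o, 'm) category \<Rightarrow> 'm set \<Rightarrow> 'm set" where
  "W_L C W = comp_closure C (W \<union> {m. split_mono C m})"

definition L0 :: "('o, 'm) category \<Rightarrow> 'm set \<Rightarrow> bool" where
  "L0 C W \<longleftrightarrow> (\<forall>a\<in>Obj C. idm C a \<in> W) \<and>
     (\<forall>v\<in>W. \<forall>w\<in>W. cod C v = dom C w \<longrightarrow> comp C w v \<in> W)"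

definition L1 :: "('o, 'm) category \<Rightarrow> 'm set \<Rightarrow> bool" where
  "L1 C W \<longleftrightarrow> (\<forall>w\<in>W. \<forall>f\<in>Arr C. dom C f = dom C w \<longrightarrow>
     (\<exists>w'\<in>W. \<exists>f'\<in>Arr C. dom C w' = cod C f \<and> dom C f' = cod C w \<and> cod C f' = cod C w' \<and>
        comp C w' f = comp C f' w))"

text \<open>Cancellation condition: equalisation by a W-morphism on the right implies
  equalisation by a V-morphism on the left. L2 is L2_wrt C W W, L2' is L2_wrt C W (W_L C W).\<close>
definition L2_wrt :: "('o, 'm) category \<Rightarrow> 'm set \<Rightarrow> 'm set \<Rightarrow> bool" where
  "L2_wrt C W V \<longleftrightarrow> (\<forall>w\<in>W. \<forall>f1\<in>Arr C. \<forall>f2\<in>Arr C.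
     dom C f1 = cod C w \<and> dom C f2 = cod C w \<and> cod C f1 = cod C f2 \<and>
     comp C f1 w = comp C f2 w \<longrightarrow>
     (\<exists>w'\<in>V. dom C w' = cod C f1 \<and> comp C w' f1 = comp C w' f2))"

end

theory Submission
  imports Defs
begin

text \<open>Call an arrow \<open>v\<close> \<open>W\<close>-cancellable if every pair of arrows equalised by \<open>v\<close> is
  already equalised by some member of \<open>W\<close>; then (L2') says exactly that (L2) holds up to
  a \<open>W\<^sub>L\<close>-equaliser, and it suffices to show that every arrow of \<open>W\<^sub>L\<close> is \<open>W\<close>-cancellable.
  Members of \<open>W\<close> are trivially so, and a split mono \<open>s\<close> with retraction \<open>e\<close> is too:
  for \<open>x \<in> W\<close>, (L1) applied to \<open>x\<close> and \<open>e\<close> yields \<open>w' e = f' x\<close> with \<open>w' \<in> W\<close>, whence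
  \<open>w' = f' x s\<close> factors through \<open>x s\<close>. Cancellability itself is not closed under
  composition, but its stable version (\<open>x v\<close> cancellable for all \<open>x \<in> W\<close>) is, which gives
  the claim by induction over \<open>W\<^sub>L\<close>.\<close>

definition W_cancellable :: "('o, 'm) category \<Rightarrow> 'm set \<Rightarrow> 'm \<Rightarrow> bool" where
  "W_cancellable C W v \<longleftrightarrow> (\<forall>f1\<in>Arr C. \<forall>f2\<in>Arr C.
     dom C f1 = dom C f2 \<and> cod C f1 = dom C v \<and> cod C f2 = dom C v \<and>
     comp C v f1 = comp C v f2 \<longrightarrow> (\<exists>u\<in>W. dom C u = cod C f1 \<and> comp C u f1 = comp C u f2))"

definition stably_W_cancellable :: "('o, 'm) category \<Rightarrow> 'm set \<Rightarrow> 'm \<Rightarrow> bool" where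
  "stably_W_cancellable C W v \<longleftrightarrow> v \<in> Arr C \<and>
     (\<forall>x\<in>W. dom C x = cod C v \<longrightarrow> W_cancellable C W (comp C x v))"

lemma L2_wrt_mono: "V \<subseteq> V' \<Longrightarrow> L2_wrt C W V \<Longrightarrow> L2_wrt C W V'"
  unfolding L2_wrt_def by blast

lemma L2_wrt_if_W_cancellable:
  assumes "L2_wrt C W V" and "\<And>v. v \<in> V \<Longrightarrow> W_cancellable C W v"
  shows "L2_wrt C W W"
  unfolding L2_wrt_def
proof (intro ballI impI)
  fix w f1 f2 assume "w \<in> W" "f1 \<in> Arr C" "f2 \<in> Arr C"
    and f: "dom C f1 = cod C w \<and> dom C f2 = cod C w \<and> cod C f1 = cod C f2 \<and> comp C f1 w = comp C f2 w"
  then obtain v where "v \<in> V" "dom C v = cod C f1" "comp C v f1 = comp C v f2"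
    using assms(1) unfolding L2_wrt_def by blast
  with assms(2) \<open>f1 \<in> Arr C\<close> \<open>f2 \<in> Arr C\<close> f
  show "\<exists>w'\<in>W. dom C w' = cod C f1 \<and> comp C w' f1 = comp C w' f2"
    unfolding W_cancellable_def by (metis (no_types, lifting))
qed

locale cat =
  fixes C :: "('o, 'm) category"
  assumes is_category: "is_category C"
begin

lemma obj_cod: "f \<in> Arr C \<Longrightarrow> cod C f \<in> Obj C"
  and arr_idm: "a \<in> Obj C \<Longrightarrow> idm C a \<in> Arr C"
  and dom_idm: "a \<in> Obj C \<Longrightarrow> dom C (idm C a) = a"
  and arr_comp: "f \<in> Arr C \<Longrightarrow> g \<in> Arr C \<Longrightarrow> cod C f = dom C g \<Longrightarrow> comp C g f \<in> Arr C"
  and dom_comp: "f \<in> Arr C \<Longrightarrow> g \<in> Arr C \<Longrightarrow> cod C f = dom C g \<Longrightarrow> dom C (comp C g f) = dom C f"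
  and cod_comp: "f \<in> Arr C \<Longrightarrow> g \<in> Arr C \<Longrightarrow> cod C f = dom C g \<Longrightarrow> cod C (comp C g f) = cod C g"
  and comp_idm_left: "f \<in> Arr C \<Longrightarrow> comp C (idm C (cod C f)) f = f"
  and comp_idm_right: "f \<in> Arr C \<Longrightarrow> comp C f (idm C (dom C f)) = f"
  and comp_assoc: "f \<in> Arr C \<Longrightarrow> g \<in> Arr C \<Longrightarrow> h \<in> Arr C \<Longrightarrow> cod C f = dom C g \<Longrightarrow>
      cod C g = dom C h \<Longrightarrow> comp C h (comp C g f) = comp C (comp C h g) f"
  using is_category unfolding is_category_def by blast+

lemma W_cancellable_if_factors_through:
  assumes "u \<in> W" "v \<in> Arr C" "h \<in> Arr C" "cod C v = dom C h" "comp C h v = u"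
  shows "W_cancellable C W v"
  unfolding W_cancellable_def
proof (intro ballI impI)
  fix f1 f2 assume f: "f1 \<in> Arr C" "f2 \<in> Arr C"
    and eq: "dom C f1 = dom C f2 \<and> cod C f1 = dom C v \<and> cod C f2 = dom C v \<and> comp C v f1 = comp C v f2"
  have "comp C u f1 = comp C h (comp C v f1)" and "comp C u f2 = comp C h (comp C v f2)"
    using comp_assoc[OF f(1) assms(2,3)] comp_assoc[OF f(2) assms(2,3)] assms eq by simp_all
  moreover have "dom C u = cod C f1"
    using dom_comp[OF assms(2,3,4)] assms(5) eq by simp
  ultimately show "\<exists>u\<in>W. dom C u = cod C f1 \<and> comp C u f1 = comp C u f2"
    using assms(1) eq by metis
qed

lemma W_cancellable_comp:
  assumes W: "W \<subseteq> Arr C" and fA: "f \<in> Arr C" and gA: "g \<in> Arr C" and fg: "cod C f = dom C g"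
    and g: "W_cancellable C W g"
    and f: "\<And>u. u \<in> W \<Longrightarrow> dom C u = cod C f \<Longrightarrow> W_cancellable C W (comp C u f)"
  shows "W_cancellable C W (comp C g f)"
  unfolding W_cancellable_def
proof (intro ballI impI)
  fix f1 f2 assume f12: "f1 \<in> Arr C" "f2 \<in> Arr C" and eq: "dom C f1 = dom C f2 \<and>
    cod C f1 = dom C (comp C g f) \<and> cod C f2 = dom C (comp C g f) \<and>
    comp C (comp C g f) f1 = comp C (comp C g f) f2"
  have dom_gf: "dom C (comp C g f) = dom C f" using dom_comp[OF fA gA fg] .
  have ffi: "comp C f fi \<in> Arr C" "dom C (comp C f fi) = dom C f1" "cod C (comp C f fi) = dom C g"
    "comp C g (comp C f fi) = comp C (comp C g f) fi"
    if "fi \<in> Arr C" "dom C fi = dom C f1" "cod C fi = dom C f" for fi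
    using that arr_comp[OF that(1) fA] dom_comp[OF that(1) fA] cod_comp[OF that(1) fA]
      comp_assoc[OF that(1) fA gA] fg by auto
  note f1 = ffi[OF f12(1)] and f2 = ffi[OF f12(2)]
  have "comp C g (comp C f f1) = comp C g (comp C f f2)"
    using eq f1 f2 dom_gf by simp
  then obtain u where u: "u \<in> W" "dom C u = cod C f"
    and u_eq: "comp C u (comp C f f1) = comp C u (comp C f f2)"
    using g f1 f2 eq dom_gf fg unfolding W_cancellable_def by (metis (no_types, lifting))
  have uA: "u \<in> Arr C" using u W by auto
  have "comp C (comp C u f) f1 = comp C (comp C u f) f2"
    using u_eq comp_assoc[OF f12(1) fA uA] comp_assoc[OF f12(2) fA uA] eq dom_gf u by simp
  with f[OF u] f12 eq dom_gf dom_comp[OF fA uA] u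
  show "\<exists>u\<in>W. dom C u = cod C f1 \<and> comp C u f1 = comp C u f2"
    unfolding W_cancellable_def by auto
qed

end

locale L0_L1_class = cat +
  fixes W :: "'m set"
  assumes W_arr: "W \<subseteq> Arr C"
    and L0: "L0 C W"
    and L1: "L1 C W"
begin

lemma idm_in_W: "a \<in> Obj C \<Longrightarrow> idm C a \<in> W"
  using L0 unfolding L0_def by blast

lemma comp_in_W: "v \<in> W \<Longrightarrow> w \<in> W \<Longrightarrow> cod C v = dom C w \<Longrightarrow> comp C w v \<in> W"
  using L0 unfolding L0_def by blast

lemma stably_W_cancellable_if_in_W:
  assumes "v \<in> W" shows "stably_W_cancellable C W v"
  unfolding stably_W_cancellable_def
proof (intro conjI ballI impI)
  show v: "v \<in> Arr C" using assms W_arr by auto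
  fix x assume x: "x \<in> W" "dom C x = cod C v"
  have xv: "comp C x v \<in> W" using comp_in_W[OF assms x(1)] x(2) by simp
  then have xvA: "comp C x v \<in> Arr C" using W_arr by auto
  show "W_cancellable C W (comp C x v)"
    by (rule W_cancellable_if_factors_through[OF xv xvA arr_idm[OF obj_cod[OF xvA]]])
      (simp_all add: dom_idm obj_cod xvA comp_idm_left)
qed

lemma stably_W_cancellable_if_split_mono:
  assumes "split_mono C s" shows "stably_W_cancellable C W s"
  unfolding stably_W_cancellable_def
proof (intro conjI ballI impI)
  obtain e where s: "s \<in> Arr C" and e: "e \<in> Arr C" "dom C e = cod C s" "cod C e = dom C s"
    "comp C e s = idm C (dom C s)"
    using assms unfolding split_mono_def by blast
  show "s \<in> Arr C" by (fact s)
  fix x assume x: "x \<in> W" "dom C x = cod C s"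
  have xA: "x \<in> Arr C" using x W_arr by auto
  obtain w' f' where w': "w' \<in> W" "dom C w' = cod C e" and f': "f' \<in> Arr C" "dom C f' = cod C x"
    "cod C f' = cod C w'" and square: "comp C w' e = comp C f' x"
    using L1 x e unfolding L1_def by metis
  have w'A: "w' \<in> Arr C" using w' W_arr by auto
  have "comp C f' (comp C x s) = comp C (comp C f' x) s"
    using comp_assoc[OF s xA f'(1)] x f' by simp
  also have "\<dots> = comp C w' (comp C e s)"
    using comp_assoc[OF s e(1) w'A] e w' square by simp
  also have "\<dots> = w'"
    using e w' comp_idm_right[OF w'A] by simp
  finally show "W_cancellable C W (comp C x s)"
    using W_cancellable_if_factors_through[OF w'(1) arr_comp[OF s xA] f'(1)] x f' s xA cod_comp
    by metis
qed

lemma stably_W_cancellable_comp: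
  assumes f: "stably_W_cancellable C W f" and g: "stably_W_cancellable C W g"
    and fg: "cod C f = dom C g"
  shows "stably_W_cancellable C W (comp C g f)"
  unfolding stably_W_cancellable_def
proof (intro conjI ballI impI)
  have fA: "f \<in> Arr C" and gA: "g \<in> Arr C"
    using f g unfolding stably_W_cancellable_def by auto
  show gfA: "comp C g f \<in> Arr C" using arr_comp[OF fA gA fg] .
  fix x assume x: "x \<in> W" "dom C x = cod C (comp C g f)"
  have xA: "x \<in> Arr C" using x W_arr by auto
  have x_dom: "cod C g = dom C x" using x cod_comp[OF fA gA fg] by simp
  have "W_cancellable C W (comp C (comp C x g) f)"
  proof (rule W_cancellable_comp[OF W_arr fA arr_comp[OF gA xA x_dom]])
    show "cod C f = dom C (comp C x g)" using dom_comp[OF gA xA x_dom] fg by simp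
    show "W_cancellable C W (comp C x g)"
      using g x x_dom unfolding stably_W_cancellable_def by simp
    show "W_cancellable C W (comp C u f)" if "u \<in> W" "dom C u = cod C f" for u
      using f that unfolding stably_W_cancellable_def by simp
  qed
  then show "W_cancellable C W (comp C x (comp C g f))"
    using comp_assoc[OF fA gA xA fg x_dom] by simp
qed

lemma W_cancellable_if_stably:
  assumes "stably_W_cancellable C W v" shows "W_cancellable C W v"
proof -
  have v: "v \<in> Arr C" using assms unfolding stably_W_cancellable_def by simp
  have "W_cancellable C W (comp C (idm C (cod C v)) v)"
    using assms v unfolding stably_W_cancellable_def
    by (simp add: idm_in_W obj_cod dom_idm)
  then show ?thesis using comp_idm_left[OF v] by simp
qed

lemma W_cancellable_if_in_W_L:
  assumes "v \<in> W_L C W" shows "W_cancellable C W v"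
proof -
  have "stably_W_cancellable C W v"
    using assms unfolding W_L_def
  proof (induction rule: comp_closure.induct)
    case (base s) then show ?case
      using stably_W_cancellable_if_in_W stably_W_cancellable_if_split_mono by blast
  next
    case (compose f g) then show ?case using stably_W_cancellable_comp by blast
  qed
  then show ?thesis by (rule W_cancellable_if_stably)
qed

end

theorem mainTheorem2:
  fixes C :: "('o, 'm) category" and W :: "'m set"
  assumes "is_category C"
    and "W \<subseteq> Arr C"
    and "L0 C W"
    and "L1 C W"
  shows "L2_wrt C W W \<longleftrightarrow> L2_wrt C W (W_L C W)"
proof
  have "W \<subseteq> W_L C W" unfolding W_L_def by (auto intro: comp_closure.base)
  then show "L2_wrt C W W \<Longrightarrow> L2_wrt C W (W_L C W)" by (rule L2_wrt_mono)
next
  interpret L0_L1_class C W using assms by unfold_locales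
  show "L2_wrt C W (W_L C W) \<Longrightarrow> L2_wrt C W W"
    using L2_wrt_if_W_cancellable W_cancellable_if_in_W_L by blast
qed

end
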